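(* Let $L_a,L_b,L_c$ be Lagrangians in $\mathbf R^{2n}$ and let $(\mathbf e_a,\mathbf f_a)$, $(\mathbf e_b,\mathbf f_b)$, $(\mathbf e_c,\mathbf f_c)$ be symplectic bases such that $L_a=\mathrm{Span}(\mathbf e_c)=\mathrm{Span}(\mathbf f_b)=\mathrm{Span}(\mathbf e_a+\mathbf f_a)$, $L_b=\mathrm{Span}(\mathbf e_a)=\mathrm{Span}(\mathbf f_c)=\mathrm{Span}(\mathbf e_b+\mathbf f_b)$, $L_c=\mathrm{Span}(\mathbf e_b)=\mathrm{Span}(\mathbf f_a)=\mathrm{Span}(\mathbf e_c+\mathbf f_c)$. Let $A,B,C\in\mathrm{GL}(n,\mathbf R)$ be the matrices uniquely defined by $\mathbf f_b=-\mathbf e_c\cdot A$, $\mathbf f_c=-\mathbf e_a\cdot B$, $\mathbf f_a=-\mathbf e_b\cdot C$. Then $A,B,C$ are orthogonal and $CBA=-\mathrm{Id}$. Furthermore $\mathbf e_b=(\mathbf e_c+\mathbf f_c)\cdot A$, $\mathbf e_c=(\mathbf e_a+\mathbf f_a)\cdot B$, and $\mathbf e_a=(\mathbf e_b+\mathbf f_b)\cdot C$.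
   Context: $\mathbf R^{2n}$ carries the standard symplectic form $\omega(x,y)={}^T x\begin{pmatrix}0&\mathrm{Id}\\-\mathrm{Id}&0\end{pmatrix}y$; a Lagrangian is an $n$-dimensional subspace on which $\omega$ vanishes. A symplectic basis is a pair $(\mathbf e,\mathbf f)$ of $n$-tuples of vectors forming a basis with $\omega(e_i,e_j)=\omega(f_i,f_j)=0$ and $\omega(e_i,f_j)=\delta_{ij}$. For an $n$-tuple $\mathbf v=(v_1,\dots,v_n)$ and an $n\times n$ matrix $g$, $\mathbf v\cdot g$ is the $n$-tuple whose $j$-th entry is $\sum_i v_i g_{ij}$; $\mathbf v+\mathbf w$ is the termwise sum; $\mathrm{Span}(\mathbf v)$ is the span of its entries. *)

theory Defs
  imports "HOL-Analysis.Analysis"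
begin

text \<open>We model \<open>R^{2n}\<close> as pairs \<open>(x1, x2)\<close> of vectors in \<open>R^n\<close> (index type 'n, n = CARD('n)),
  i.e. the column vector with top half x1 and bottom half x2.  Then
  \<open>x^T [[0, Id], [-Id, 0]] y = x1 . y2 - x2 . y1\<close>.\<close>

type_synonym 'n sp = "(real^'n) \<times> (real^'n)"

definition omega :: "'n::finite sp \<Rightarrow> 'n sp \<Rightarrow> real" where
  "omega x y = fst x \<bullet> snd y - snd x \<bullet> fst y"

definition lagrangian :: "'n::finite sp set \<Rightarrow> bool" where
  "lagrangian L \<longleftrightarrow> subspace L \<and> dim L = CARD('n) \<and> (\<forall>x\<in>L. \<forall>y\<in>L. omega x y = 0)"

definition symplectic_basis :: "('n::finite \<Rightarrow> 'n sp) \<Rightarrow> ('n \<Rightarrow> 'n sp) \<Rightarrow> bool" where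
  "symplectic_basis e f \<longleftrightarrow>
     (let w = case_sum e f in inj w \<and> independent (range w) \<and> span (range w) = UNIV) \<and>
     (\<forall>i j. omega (e i) (e j) = 0 \<and> omega (f i) (f j) = 0 \<and>
            omega (e i) (f j) = (if i = j then 1 else 0))"

definition tmul :: "('n::finite \<Rightarrow> 'n sp) \<Rightarrow> real^'n^'n \<Rightarrow> ('n \<Rightarrow> 'n sp)" (infixl "\<cdot>\<^sub>t" 70) where
  "v \<cdot>\<^sub>t g = (\<lambda>j. \<Sum>i\<in>UNIV. (g $ i $ j) *\<^sub>R v i)"

definition tspan :: "('n::finite \<Rightarrow> 'n sp) \<Rightarrow> 'n sp set" where
  "tspan v = span (range v)"

definition tadd :: "('n::finite \<Rightarrow> 'n sp) \<Rightarrow> ('n \<Rightarrow> 'n sp) \<Rightarrow> ('n \<Rightarrow> 'n sp)" (infixl "+\<^sub>t" 65) where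
  "v +\<^sub>t w = (\<lambda>i. v i + w i)"

definition tneg :: "('n::finite \<Rightarrow> 'n sp) \<Rightarrow> ('n \<Rightarrow> 'n sp)" ("-\<^sub>t _" [81] 80) where
  "-\<^sub>t v = (\<lambda>i. - v i)"

end

(* Since omega is nondegenerate, a vector is determined by its pairings with a symplectic
   basis.  Isotropy of L_b (containing e_a and e_b + f_b) and of L_a (containing e_a + f_a
   and f_b), together with f_a = - e_b C, gives omega(e_a j, f_b k) = C_kj and
   omega(e_a j, e_b k) = - C_kj; these are exactly the pairings of ((e_b + f_b) C)_j, so
   e_a = (e_b + f_b) C, and cyclically for e_b, e_c.  Substituting these expressions into
   omega(e_a, f_a) = Id gives C^T C = Id, and into omega(e_b, f_b) = Id gives C B A = - Id. *)

theory Submission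
  imports Defs
begin

text \<open>Boundedness is incidental: the interpretation below supplies the bilinearity rules.\<close>

lemma omega_bounded_bilinear: "bounded_bilinear (omega :: 'n::finite sp \<Rightarrow> _)"
proof
  show "\<exists>K. \<forall>x y. norm (omega x y) \<le> norm x * norm y * K"
  proof (intro exI[of _ 2] allI)
    fix x y
    have "norm (omega x y) \<le> norm (fst x) * norm (snd y) + norm (snd x) * norm (fst y)"
      unfolding omega_def real_norm_def
      using Cauchy_Schwarz_ineq2[of "fst x" "snd y"] Cauchy_Schwarz_ineq2[of "snd x" "fst y"]
      by linarith
    also have "\<dots> \<le> norm x * norm y + norm x * norm y"
      by (intro add_mono mult_mono norm_ge_zero) (metis norm_fst_le norm_snd_le prod.collapse)+
    also have "\<dots> = norm x * norm y * 2"
      by simp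
    finally show "norm (omega x y) \<le> norm x * norm y * 2" .
  qed
qed (auto simp: omega_def inner_add_left inner_add_right algebra_simps)

interpretation omega: bounded_bilinear omega
  by (rule omega_bounded_bilinear)

lemma omega_antisym: "omega x y = - omega y x"
  by (simp add: omega_def inner_commute)

lemma tadd_apply: "(v +\<^sub>t w) i = v i + w i"
  by (simp add: tadd_def)

lemma tneg_apply: "(-\<^sub>t v) i = - v i"
  by (simp add: tneg_def)

lemma tneg_inject: "-\<^sub>t v = -\<^sub>t w \<longleftrightarrow> v = w"
  by (simp add: tneg_def fun_eq_iff)

lemma tmul_tadd_distrib: "((v +\<^sub>t w) \<cdot>\<^sub>t g) j = (v \<cdot>\<^sub>t g) j + (w \<cdot>\<^sub>t g) j"
  by (simp add: tmul_def tadd_def scaleR_add_right sum.distrib)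

lemma omega_tmul_left: "omega ((v \<cdot>\<^sub>t g) j) z = (\<Sum>i\<in>UNIV. g $ i $ j * omega (v i) z)"
  by (simp add: tmul_def omega.sum_left omega.scaleR_left)

lemma omega_tmul_right: "omega z ((v \<cdot>\<^sub>t g) j) = (\<Sum>i\<in>UNIV. g $ i $ j * omega z (v i))"
  by (simp add: tmul_def omega.sum_right omega.scaleR_right)

lemma lagrangian_tspan_omega:
  assumes "lagrangian L" "L = tspan v" "L = tspan w"
  shows "omega (v i) (w j) = 0"
  using assms unfolding lagrangian_def tspan_def by (metis span_base rangeI)

lemma symplectic_basis_omega:
  assumes "symplectic_basis e f"
  shows "omega (e i) (e j) = 0" "omega (f i) (f j) = 0"
    "omega (e i) (f j) = (if i = j then 1 else 0)" "omega (f i) (e j) = (if i = j then -1 else 0)"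
  using assms unfolding symplectic_basis_def by (auto simp: omega_antisym[of "f i"])

lemma symplectic_basis_nondegenerate:
  assumes "symplectic_basis e f" "\<And>i. omega v (e i) = 0" "\<And>i. omega v (f i) = 0"
  shows "v = 0"
proof -
  have "omega v w = 0" for w
  proof -
    have "w \<in> span (range (case_sum e f))"
      using assms(1) by (simp add: symplectic_basis_def Let_def)
    then show ?thesis
    proof (induct rule: span_induct_alt)
      case (step c x y)
      then show ?case
        using assms(2,3) by (auto simp: omega.add_right omega.scaleR_right split: sum.splits)
    qed (simp add: omega.zero_right)
  qed
  from this[of "(- snd v, fst v)"] have "fst v \<bullet> fst v + snd v \<bullet> snd v = 0"
    by (simp add: omega_def)
  then show "v = 0"
    by (simp add: prod_eq_iff add_nonneg_eq_0_iff)
qed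

lemma omega_tmul_symplectic_basis:
  assumes "symplectic_basis e f"
  shows "omega ((e \<cdot>\<^sub>t g) j) (e k) = 0" "omega ((f \<cdot>\<^sub>t g) j) (f k) = 0"
    "omega ((e \<cdot>\<^sub>t g) j) (f k) = g $ k $ j" "omega ((f \<cdot>\<^sub>t g) j) (e k) = - g $ k $ j"
  by (simp_all add: omega_tmul_left symplectic_basis_omega[OF assms] if_distrib cong: if_cong)

lemma neg_tmul_ex1:
  assumes "symplectic_basis e f" "v = -\<^sub>t (e \<cdot>\<^sub>t Y)"
  shows "\<exists>!X. v = -\<^sub>t (e \<cdot>\<^sub>t X)"
proof (rule ex1I[of _ Y])
  fix X
  assume "v = -\<^sub>t (e \<cdot>\<^sub>t X)"
  then have "(e \<cdot>\<^sub>t X) j = (e \<cdot>\<^sub>t Y) j" for j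
    using assms(2) by (simp add: tneg_inject)
  then have "X $ k $ j = Y $ k $ j" for k j
    by (metis omega_tmul_symplectic_basis(3)[OF assms(1)])
  then show "X = Y"
    by (simp add: vec_eq_iff)
qed (rule assms(2))

lemma tmul_eq_of_isotropic:
  assumes sb: "symplectic_basis e f" and w: "w = -\<^sub>t (e \<cdot>\<^sub>t C)"
    and iso_ef: "\<And>i j. omega (u i) ((e +\<^sub>t f) j) = 0"
    and iso_f: "\<And>i j. omega ((u +\<^sub>t w) i) (f j) = 0"
  shows "u = (e +\<^sub>t f) \<cdot>\<^sub>t C"
proof
  fix j
  have u_f: "omega (u j) (f k) = C $ k $ j" for k
    using iso_f[of j k]
    by (simp add: w tadd_apply tneg_apply omega.diff_left omega_tmul_symplectic_basis[OF sb])
  have u_e: "omega (u j) (e k) = - C $ k $ j" for k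
    using iso_ef[of j k] u_f[of k] by (simp add: tadd_apply omega.add_right)
  have "u j - ((e +\<^sub>t f) \<cdot>\<^sub>t C) j = 0"
    by (rule symplectic_basis_nondegenerate[OF sb])
      (simp_all add: u_e u_f omega.diff_left tmul_tadd_distrib omega.add_left
        omega_tmul_symplectic_basis[OF sb])
  then show "u j = ((e +\<^sub>t f) \<cdot>\<^sub>t C) j"
    by simp
qed

lemma orthogonal_matrix_of_symplectic_bases:
  assumes sa: "symplectic_basis ea fa" and sb: "symplectic_basis eb fb"
    and ea: "ea = (eb +\<^sub>t fb) \<cdot>\<^sub>t C" and fa: "fa = -\<^sub>t (eb \<cdot>\<^sub>t C)"
  shows "orthogonal_matrix C"
proof -
  have "(transpose C ** C) $ j $ k = mat 1 $ j $ k" for j k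
  proof -
    have "(transpose C ** C) $ j $ k = omega (ea j) (fa k)"
      by (simp add: ea fa tneg_apply omega.minus_right tmul_tadd_distrib omega.add_left
          omega_tmul_right omega_tmul_symplectic_basis[OF sb] sum_negf mult_ac
          matrix_matrix_mult_def transpose_def)
    also have "\<dots> = mat 1 $ j $ k"
      by (simp add: symplectic_basis_omega[OF sa] mat_def)
    finally show ?thesis .
  qed
  then show ?thesis
    by (simp add: orthogonal_matrix vec_eq_iff)
qed

lemma matrix_cycle_eq_neg_mat_1:
  assumes sb: "symplectic_basis eb fb"
    and fb: "fb = -\<^sub>t (ec \<cdot>\<^sub>t A)" and ec: "ec = (ea +\<^sub>t fa) \<cdot>\<^sub>t B"
    and ea: "ea = (eb +\<^sub>t fb) \<cdot>\<^sub>t C" and fa: "fa = -\<^sub>t (eb \<cdot>\<^sub>t C)"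
  shows "C ** B ** A = - mat 1"
proof -
  have eb_ea_fa: "omega (eb k) ((ea +\<^sub>t fa) m) = C $ k $ m" for k m
    by (simp add: ea fa tadd_apply tneg_apply omega.add_right omega.minus_right tmul_tadd_distrib
        omega_antisym[of "eb k"] omega_tmul_symplectic_basis[OF sb])
  have eb_ec: "omega (eb k) (ec l) = (C ** B) $ k $ l" for k l
    by (subst ec) (simp add: omega_tmul_right eb_ea_fa matrix_matrix_mult_def mult_ac)
  have "(C ** B ** A) $ k $ j = - omega (eb k) (fb j)" for k j
    by (simp add: fb tneg_apply omega.minus_right omega_tmul_right eb_ec matrix_matrix_mult_def
        mult_ac)
  then show ?thesis
    by (simp add: vec_eq_iff symplectic_basis_omega[OF sb] mat_def)
qed

theorem lemma3p8:
  fixes La Lb Lc :: "'n::finite sp set"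
    and ea fa eb fb ec fc :: "'n \<Rightarrow> 'n sp"
    and A B C :: "real^'n^'n"
  assumes "lagrangian La" "lagrangian Lb" "lagrangian Lc"
    and "symplectic_basis ea fa" "symplectic_basis eb fb" "symplectic_basis ec fc"
    and "La = tspan ec" "La = tspan fb" "La = tspan (ea +\<^sub>t fa)"
    and "Lb = tspan ea" "Lb = tspan fc" "Lb = tspan (eb +\<^sub>t fb)"
    and "Lc = tspan eb" "Lc = tspan fa" "Lc = tspan (ec +\<^sub>t fc)"
    and "invertible A" "invertible B" "invertible C"
    and "fb = -\<^sub>t (ec \<cdot>\<^sub>t A)" "fc = -\<^sub>t (ea \<cdot>\<^sub>t B)" "fa = -\<^sub>t (eb \<cdot>\<^sub>t C)"
  shows "(\<exists>!X. fb = -\<^sub>t (ec \<cdot>\<^sub>t X)) \<and> (\<exists>!X. fc = -\<^sub>t (ea \<cdot>\<^sub>t X)) \<and> (\<exists>!X. fa = -\<^sub>t (eb \<cdot>\<^sub>t X))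
    \<and> orthogonal_matrix A \<and> orthogonal_matrix B \<and> orthogonal_matrix C
    \<and> C ** B ** A = - mat 1
    \<and> eb = (ec +\<^sub>t fc) \<cdot>\<^sub>t A \<and> ec = (ea +\<^sub>t fa) \<cdot>\<^sub>t B \<and> ea = (eb +\<^sub>t fb) \<cdot>\<^sub>t C"
proof -
  note sa = assms(4) and sb = assms(5) and sc = assms(6)
    and fb = assms(19) and fc = assms(20) and fa = assms(21)
  note iso = lagrangian_tspan_omega
  have ea: "ea = (eb +\<^sub>t fb) \<cdot>\<^sub>t C"
    by (rule tmul_eq_of_isotropic[OF sb fa
          iso[OF \<open>lagrangian Lb\<close> \<open>Lb = tspan ea\<close> \<open>Lb = tspan (eb +\<^sub>t fb)\<close>]
          iso[OF \<open>lagrangian La\<close> \<open>La = tspan (ea +\<^sub>t fa)\<close> \<open>La = tspan fb\<close>]])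
  have eb: "eb = (ec +\<^sub>t fc) \<cdot>\<^sub>t A"
    by (rule tmul_eq_of_isotropic[OF sc fb
          iso[OF \<open>lagrangian Lc\<close> \<open>Lc = tspan eb\<close> \<open>Lc = tspan (ec +\<^sub>t fc)\<close>]
          iso[OF \<open>lagrangian Lb\<close> \<open>Lb = tspan (eb +\<^sub>t fb)\<close> \<open>Lb = tspan fc\<close>]])
  have ec: "ec = (ea +\<^sub>t fa) \<cdot>\<^sub>t B"
    by (rule tmul_eq_of_isotropic[OF sa fc
          iso[OF \<open>lagrangian La\<close> \<open>La = tspan ec\<close> \<open>La = tspan (ea +\<^sub>t fa)\<close>]
          iso[OF \<open>lagrangian Lc\<close> \<open>Lc = tspan (ec +\<^sub>t fc)\<close> \<open>Lc = tspan fa\<close>]])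
  show ?thesis
    using neg_tmul_ex1[OF sc fb] neg_tmul_ex1[OF sa fc] neg_tmul_ex1[OF sb fa]
      orthogonal_matrix_of_symplectic_bases[OF sa sb ea fa]
      orthogonal_matrix_of_symplectic_bases[OF sb sc eb fb]
      orthogonal_matrix_of_symplectic_bases[OF sc sa ec fc]
      matrix_cycle_eq_neg_mat_1[OF sb fb ec ea fa] ea eb ec
    by blast
qed

end
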